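(* Let $\mathcal{B}$ be a finite collection of subsets of $\mathbb{T}$ and let $\mathcal{U}\in\beta\mathbb{N}$ be idempotent. Then there is $\mu\in\mathbb{A}_{\mathcal{U}}$ such that $(\mu\,\hat{}\,\mu)(E)=\mu(E)$ for every $E\in\mathcal{B}$.
   Context: For $a,b\subseteq(0,1]$ put $a\,\hat{}\,b=\tfrac12 a\cup\tfrac12(b+1)$; $\mathbb{T}$ is the set generated from $\mathbf{1}=\{1\}$ by $\hat{}$ (the free binary system on one generator), $\#(t)$ is the cardinality of $t$, $\mathbb{T}_n=\{t:\#(t)=n\}$, and $\mathbb{A}_n$ is the set of probability measures on $\mathbb{T}_n$. For a set $S$, $\Pr(S)$ denotes the set of finitely additive probability measures on $S$, identified with the positive linear functionals $f$ on $\ell^\infty(S)$ with $f(\bar 1)=1$, with the weak* topology; $\mathbb{A}_n\subseteq\Pr(\mathbb{T})$. For $\mu,\nu\in\Pr(\mathbb{T})$, $(\mu\,\hat{}\,\nu)(f)=\int\int f(x\,\hat{}\,y)\,d\nu(y)\,d\mu(x)$. $\mathcal{U}\in\beta\mathbb{N}$ is idempotent if $\mathcal{U}+\mathcal{U}=\mathcal{U}$ for the extended addition ($W\in\mathcal{U}+\mathcal{V}$ iff $\{m:\{n:m+n\in W\}\in\mathcal{V}\}\in\mathcal{U}$). $\mathbb{A}_{\mathcal{U}}$ is the set of $\mu\in\Pr(\mathbb{T})$ such that for every weak*-open $W\ni\mu$, $\{m\in\mathbb{N}:W\cap\mathbb{A}_m\neq\emptyset\}\in\mathcal{U}$. *)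

theory Defs
  imports "HOL-Analysis.Analysis"
begin

definition hat :: "real set \<Rightarrow> real set \<Rightarrow> real set" where
  "hat a b = (\<lambda>x. x / 2) ` a \<union> (\<lambda>x. (x + 1) / 2) ` b"

inductive_set TT :: "real set set" where
  one: "{1} \<in> TT"
| hat: "a \<in> TT \<Longrightarrow> b \<in> TT \<Longrightarrow> hat a b \<in> TT"

definition TT_n :: "nat \<Rightarrow> real set set" where
  "TT_n n = {t \<in> TT. card t = n}"

definition linfty :: "(real set \<Rightarrow> real) set" where
  "linfty = {f. f \<in> extensional TT \<and> bounded (f ` TT)}"

definition PrT :: "((real set \<Rightarrow> real) \<Rightarrow> real) set" where
  "PrT = {\<mu>. \<mu> \<in> linfty \<rightarrow>\<^sub>E UNIV
     \<and> (\<forall>f\<in>linfty. \<forall>g\<in>linfty. \<forall>a b. \<mu> (restrict (\<lambda>t. a * f t + b * g t) TT) = a * \<mu> f + b * \<mu> g)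
     \<and> (\<forall>f\<in>linfty. (\<forall>t\<in>TT. 0 \<le> f t) \<longrightarrow> 0 \<le> \<mu> f)
     \<and> \<mu> (restrict (\<lambda>_. 1) TT) = 1}"

definition weak_star :: "((real set \<Rightarrow> real) \<Rightarrow> real) topology" where
  "weak_star = subtopology (product_topology (\<lambda>_. euclideanreal) linfty) PrT"

definition meas :: "((real set \<Rightarrow> real) \<Rightarrow> real) \<Rightarrow> real set set \<Rightarrow> real" where
  "meas \<mu> E = \<mu> (restrict (indicator E) TT)"

definition hatm :: "((real set \<Rightarrow> real) \<Rightarrow> real) \<Rightarrow> ((real set \<Rightarrow> real) \<Rightarrow> real)
    \<Rightarrow> ((real set \<Rightarrow> real) \<Rightarrow> real)" where
  "hatm \<mu> \<nu> = (\<lambda>f\<in>linfty. \<mu> (restrict (\<lambda>x. \<nu> (restrict (\<lambda>y. f (hat x y)) TT)) TT))"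

definition AA :: "nat \<Rightarrow> ((real set \<Rightarrow> real) \<Rightarrow> real) set" where
  "AA n = {(\<lambda>f\<in>linfty. \<Sum>t\<in>TT_n n. p t * f t) | p.
             (\<forall>t\<in>TT_n n. 0 \<le> p t) \<and> (\<Sum>t\<in>TT_n n. p t) = 1}"

definition Npos :: "nat set" where "Npos = {1..}"

definition ultrafilter_N :: "nat set set \<Rightarrow> bool" where
  "ultrafilter_N U \<longleftrightarrow> U \<subseteq> Pow Npos \<and> Npos \<in> U \<and> {} \<notin> U
     \<and> (\<forall>A\<in>U. \<forall>B\<in>U. A \<inter> B \<in> U)
     \<and> (\<forall>A\<in>U. \<forall>B. A \<subseteq> B \<and> B \<subseteq> Npos \<longrightarrow> B \<in> U)
     \<and> (\<forall>A. A \<subseteq> Npos \<longrightarrow> A \<in> U \<or> Npos - A \<in> U)"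

definition uplus :: "nat set set \<Rightarrow> nat set set \<Rightarrow> nat set set" where
  "uplus U V = {W. W \<subseteq> Npos \<and> {m\<in>Npos. {n\<in>Npos. m + n \<in> W} \<in> V} \<in> U}"

definition idempotent_N :: "nat set set \<Rightarrow> bool" where
  "idempotent_N U \<longleftrightarrow> uplus U U = U"

definition AU :: "nat set set \<Rightarrow> ((real set \<Rightarrow> real) \<Rightarrow> real) set" where
  "AU U = {\<mu>\<in>PrT. \<forall>W. openin weak_star W \<and> \<mu> \<in> W \<longrightarrow> {m\<in>Npos. W \<inter> AA m \<noteq> {}} \<in> U}"

end

(*
  Zero-one valued elements of AU U exist (ultrafilter limits of point masses at combs) and are
  closed under the product hatm, because idempotence of U lets products of approximants from
  AA n and AA m approximate the product from AA (n + m).  Sorting them by which sets of B they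
  contain gives a finite magma.  By Brouwer's fixed point theorem it carries a probability vector
  equal to its own convolution square, and the corresponding mixture of representatives lies in
  the convex set AU U and satisfies (hatm \<mu> \<mu>)(E) = \<mu>(E) for every E in B.
*)

theory Submission
  imports Defs "HOL-Homology.Homology"
begin

type_synonym functional = "(real set \<Rightarrow> real) \<Rightarrow> real"

lemma TT_finite_nonempty_subset:
  "t \<in> TT \<Longrightarrow> finite t \<and> t \<noteq> {} \<and> t \<subseteq> {0<..1}"
proof (induction rule: TT.induct)
  case (hat a b)
  then have "(\<lambda>x. x / 2) ` a \<subseteq> {0<..1}" "(\<lambda>x. (x + 1) / 2) ` b \<subseteq> {0<..1}"
    by (auto simp: subset_iff)
  with hat show ?case by (auto simp: hat_def)
qed simp

lemma card_hat:
  assumes "a \<subseteq> {0<..1}" "b \<subseteq> {0<..1}" "finite a" "finite b"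
  shows "card (hat a b) = card a + card b"
proof -
  have "(\<lambda>x. x / 2) ` a \<inter> (\<lambda>x. (x + 1) / 2) ` b = {}"
    using assms(1,2) by (force simp: subset_iff)
  moreover have "inj_on (\<lambda>x::real. x / 2) a" "inj_on (\<lambda>x::real. (x + 1) / 2) b"
    by (auto simp: inj_on_def)
  ultimately show ?thesis
    unfolding hat_def using assms(3,4) by (simp add: card_Un_disjoint card_image)
qed

lemma card_hat_TT: "a \<in> TT \<Longrightarrow> b \<in> TT \<Longrightarrow> card (hat a b) = card a + card b"
  using TT_finite_nonempty_subset by (simp add: card_hat)

lemma card_TT_pos: "t \<in> TT \<Longrightarrow> 0 < card t"
  using TT_finite_nonempty_subset card_gt_0_iff by blast

lemma TT_n_subset: "TT_n n \<subseteq> TT"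
  by (auto simp: TT_n_def)

lemma hat_in_TT_n: "x \<in> TT_n n \<Longrightarrow> y \<in> TT_n m \<Longrightarrow> hat x y \<in> TT_n (n + m)"
  by (auto simp: TT_n_def card_hat_TT intro: TT.hat)

lemma finite_TT_n: "finite (TT_n N)"
proof (induction N rule: less_induct)
  case (less N)
  have "TT_n N \<subseteq> insert {1} (\<Union>k\<in>{1..<N}. (\<lambda>(x, y). hat x y) ` (TT_n k \<times> TT_n (N - k)))"
  proof
    fix t assume "t \<in> TT_n N"
    then have "t \<in> TT" and card_t: "card t = N" by (auto simp: TT_n_def)
    then show "t \<in> insert {1} (\<Union>k\<in>{1..<N}. (\<lambda>(x, y). hat x y) ` (TT_n k \<times> TT_n (N - k)))"
    proof cases
      case (hat a b)
      then have "card t = card a + card b" "0 < card a" "0 < card b"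
        using card_hat_TT card_TT_pos by auto
      with hat card_t have "card a \<in> {1..<N}" "(a, b) \<in> TT_n (card a) \<times> TT_n (N - card a)"
        by (auto simp: TT_n_def)
      with hat show ?thesis by blast
    qed simp
  qed
  moreover have "finite (\<Union>k\<in>{1..<N}. (\<lambda>(x, y). hat x y) ` (TT_n k \<times> TT_n (N - k)))"
    using less by (intro finite_UN_I finite_imageI finite_cartesian_product) auto
  ultimately show ?case
    using finite_subset by blast
qed

fun comb :: "nat \<Rightarrow> real set" where
  "comb 0 = {1}"
| "comb (Suc n) = hat (comb n) {1}"

lemma comb_in_TT_n: "comb n \<in> TT_n (Suc n)"
  by (induction n) (auto simp: TT_n_def card_hat_TT TT.one intro: TT.intros)

lemma comb_in_TT: "comb n \<in> TT"
  using comb_in_TT_n TT_n_subset by blast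

lemma linfty_iff: "f \<in> linfty \<longleftrightarrow> f \<in> extensional TT \<and> (\<exists>M. \<forall>t\<in>TT. \<bar>f t\<bar> \<le> M)"
  unfolding linfty_def bounded_iff by auto

lemma linfty_bounded: "f \<in> linfty \<Longrightarrow> \<exists>M. \<forall>t\<in>TT. \<bar>f t\<bar> \<le> M"
  by (simp add: linfty_iff)

lemma restrict_in_linfty: "(\<And>t. t \<in> TT \<Longrightarrow> \<bar>f t\<bar> \<le> M) \<Longrightarrow> restrict f TT \<in> linfty"
  by (auto simp: linfty_iff)

lemma linfty_const: "restrict (\<lambda>_. c) TT \<in> linfty"
  by (rule restrict_in_linfty[of _ "\<bar>c\<bar>"]) simp

lemma linfty_indicator: "restrict (indicator E) TT \<in> linfty"
  by (rule restrict_in_linfty[of _ 1]) (simp add: indicator_def)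

lemma linfty_lincomb:
  assumes "f \<in> linfty" "g \<in> linfty"
  shows "restrict (\<lambda>t. a * f t + b * g t) TT \<in> linfty"
proof -
  obtain M N where M: "\<forall>t\<in>TT. \<bar>f t\<bar> \<le> M" and N: "\<forall>t\<in>TT. \<bar>g t\<bar> \<le> N"
    using assms linfty_bounded by metis
  have "\<bar>a * f t + b * g t\<bar> \<le> \<bar>a\<bar> * M + \<bar>b\<bar> * N" if "t \<in> TT" for t
  proof -
    have "\<bar>a * f t + b * g t\<bar> \<le> \<bar>a\<bar> * \<bar>f t\<bar> + \<bar>b\<bar> * \<bar>g t\<bar>"
      by (metis abs_mult abs_triangle_ineq)
    also have "\<dots> \<le> \<bar>a\<bar> * M + \<bar>b\<bar> * N"
      using M N that by (intro add_mono mult_left_mono) auto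
    finally show ?thesis .
  qed
  then show ?thesis by (rule restrict_in_linfty)
qed

lemma linfty_sum:
  assumes "finite J" "\<forall>j\<in>J. g j \<in> linfty"
  shows "restrict (\<lambda>t. \<Sum>j\<in>J. c j * g j t) TT \<in> linfty"
  using assms
proof (induction J rule: finite_induct)
  case empty
  show ?case by (rule restrict_in_linfty[of _ 0]) simp
next
  case (insert k J)
  then have "restrict (\<lambda>t. c k * g k t + 1 * restrict (\<lambda>t. \<Sum>j\<in>J. c j * g j t) TT t) TT \<in> linfty"
    by (intro linfty_lincomb) auto
  moreover have "restrict (\<lambda>t. c k * g k t + 1 * restrict (\<lambda>t. \<Sum>j\<in>J. c j * g j t) TT t) TT
      = restrict (\<lambda>t. \<Sum>j\<in>insert k J. c j * g j t) TT"
    using insert by (intro restrict_ext) simp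
  ultimately show ?case by metis
qed

lemma PrT_I:
  assumes "\<mu> \<in> extensional linfty"
    and "\<And>f g a b. f \<in> linfty \<Longrightarrow> g \<in> linfty \<Longrightarrow>
           \<mu> (restrict (\<lambda>t. a * f t + b * g t) TT) = a * \<mu> f + b * \<mu> g"
    and "\<And>f. f \<in> linfty \<Longrightarrow> \<forall>t\<in>TT. 0 \<le> f t \<Longrightarrow> 0 \<le> \<mu> f"
    and "\<mu> (restrict (\<lambda>_. 1) TT) = 1"
  shows "\<mu> \<in> PrT"
  using assms unfolding PrT_def by (auto simp: PiE_iff)

lemma PrT_D:
  assumes "\<mu> \<in> PrT"
  shows "\<mu> \<in> extensional linfty"
    and "\<And>f g a b. f \<in> linfty \<Longrightarrow> g \<in> linfty \<Longrightarrow>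
           \<mu> (restrict (\<lambda>t. a * f t + b * g t) TT) = a * \<mu> f + b * \<mu> g"
    and "\<And>f. f \<in> linfty \<Longrightarrow> \<forall>t\<in>TT. 0 \<le> f t \<Longrightarrow> 0 \<le> \<mu> f"
    and "\<mu> (restrict (\<lambda>_. 1) TT) = 1"
  using assms unfolding PrT_def by (auto simp: PiE_iff)

lemma PrT_lincomb:
  assumes "\<mu> \<in> PrT" "f \<in> linfty" "g \<in> linfty" "\<And>t. t \<in> TT \<Longrightarrow> h t = a * f t + b * g t"
  shows "\<mu> (restrict h TT) = a * \<mu> f + b * \<mu> g"
proof -
  have "restrict h TT = restrict (\<lambda>t. a * f t + b * g t) TT"
    using assms(4) by (intro restrict_ext) simp
  then show ?thesis using PrT_D(2)[OF assms(1-3)] by simp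
qed

lemma PrT_nonneg:
  "\<mu> \<in> PrT \<Longrightarrow> f \<in> linfty \<Longrightarrow> (\<And>t. t \<in> TT \<Longrightarrow> 0 \<le> f t) \<Longrightarrow> 0 \<le> \<mu> f"
  using PrT_D(3) by blast

lemma PrT_const: "\<mu> \<in> PrT \<Longrightarrow> \<mu> (restrict (\<lambda>_. c) TT) = c"
  using PrT_lincomb[of \<mu> "restrict (\<lambda>_. 1) TT" "restrict (\<lambda>_. 1) TT" "\<lambda>_. c" c 0]
  by (simp add: linfty_const PrT_D(4))

lemma PrT_abs_le:
  assumes "\<mu> \<in> PrT" "f \<in> linfty" "\<And>t. t \<in> TT \<Longrightarrow> \<bar>f t\<bar> \<le> M"
  shows "\<bar>\<mu> f\<bar> \<le> M"
proof -
  let ?one = "restrict (\<lambda>_. 1) TT"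
  have "0 \<le> \<mu> (restrict (\<lambda>t. M * ?one t + s * f t) TT)" if "s \<in> {-1, 1}" for s
    by (rule PrT_nonneg[OF assms(1) linfty_lincomb[OF linfty_const assms(2)]])
      (use assms(3) that in \<open>force simp: abs_le_iff\<close>)
  moreover have "\<mu> (restrict (\<lambda>t. M * ?one t + s * f t) TT) = M + s * \<mu> f" for s
    using PrT_D(2)[OF assms(1) linfty_const assms(2)] PrT_D(4)[OF assms(1)] by simp
  ultimately have "0 \<le> M - \<mu> f" "0 \<le> M + \<mu> f"
    by (metis insertCI mult_minus1 uminus_add_conv_diff add.commute mult_1)+
  then show ?thesis by linarith
qed

lemma PrT_sum:
  assumes "\<mu> \<in> PrT" "finite J" "\<forall>j\<in>J. g j \<in> linfty"
    and "\<And>t. t \<in> TT \<Longrightarrow> h t = (\<Sum>j\<in>J. c j * g j t)"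
  shows "\<mu> (restrict h TT) = (\<Sum>j\<in>J. c j * \<mu> (g j))"
  using assms(2-4)
proof (induction J arbitrary: h rule: finite_induct)
  case empty
  then have "restrict h TT = restrict (\<lambda>_. 0) TT"
    by (intro restrict_ext) simp
  then show ?case using PrT_const[OF assms(1), of 0] by (metis sum.empty)
next
  case (insert k J)
  let ?g = "restrict (\<lambda>t. \<Sum>j\<in>J. c j * g j t) TT"
  have "\<mu> (restrict h TT) = c k * \<mu> (g k) + 1 * \<mu> ?g"
    using insert by (intro PrT_lincomb[OF assms(1)] linfty_sum) auto
  also have "\<mu> ?g = (\<Sum>j\<in>J. c j * \<mu> (g j))"
    using insert by (intro insert.IH) auto
  finally show ?case using insert by simp
qed

definition distribution :: "'i set \<Rightarrow> ('i \<Rightarrow> real) \<Rightarrow> bool" where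
  "distribution J a \<longleftrightarrow> (\<forall>i\<in>J. 0 \<le> a i) \<and> (\<Sum>i\<in>J. a i) = 1"

lemma distribution_sum_abs_le:
  assumes "finite J" "distribution J a" "\<And>i. i \<in> J \<Longrightarrow> \<bar>x i\<bar> \<le> c"
  shows "\<bar>\<Sum>i\<in>J. a i * x i\<bar> \<le> c"
proof -
  have "\<bar>\<Sum>i\<in>J. a i * x i\<bar> \<le> (\<Sum>i\<in>J. a i * \<bar>x i\<bar>)"
    using assms(2) sum_abs[of "\<lambda>i. a i * x i" J] by (simp add: distribution_def abs_mult)
  also have "\<dots> \<le> (\<Sum>i\<in>J. a i * c)"
    using assms(2,3) by (intro sum_mono mult_left_mono) (auto simp: distribution_def)
  also have "\<dots> = c"
    using assms(2) by (simp add: distribution_def flip: sum_distrib_right)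
  finally show ?thesis .
qed

definition mixture :: "'i set \<Rightarrow> ('i \<Rightarrow> real) \<Rightarrow> ('i \<Rightarrow> functional) \<Rightarrow> functional" where
  "mixture J a P = (\<lambda>f\<in>linfty. \<Sum>i\<in>J. a i * P i f)"

definition point_mass :: "real set \<Rightarrow> functional" where
  "point_mass t = (\<lambda>f\<in>linfty. f t)"

lemma mixture_PrT:
  assumes "distribution J a" "\<forall>i\<in>J. P i \<in> PrT"
  shows "mixture J a P \<in> PrT"
proof (rule PrT_I)
  fix f g a' b assume fg: "f \<in> linfty" "g \<in> linfty"
  then have "P i (restrict (\<lambda>t. a' * f t + b * g t) TT) = a' * P i f + b * P i g" if "i \<in> J" for i
    using assms(2) that PrT_D(2) by blast
  then show "mixture J a P (restrict (\<lambda>t. a' * f t + b * g t) TT)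
      = a' * mixture J a P f + b * mixture J a P g"
    using fg linfty_lincomb[OF fg]
    by (simp add: mixture_def algebra_simps sum.distrib sum_distrib_left)
next
  fix f assume "f \<in> linfty" "\<forall>t\<in>TT. 0 \<le> f t"
  then show "0 \<le> mixture J a P f"
    using assms PrT_D(3) by (auto simp: mixture_def distribution_def intro!: sum_nonneg)
next
  have "(\<Sum>i\<in>J. a i * P i (restrict (\<lambda>_. 1) TT)) = (\<Sum>i\<in>J. a i)"
    using assms(2) PrT_D(4) by (intro sum.cong) auto
  then show "mixture J a P (restrict (\<lambda>_. 1) TT) = 1"
    using assms(1) linfty_const by (simp add: mixture_def distribution_def)
qed (simp add: mixture_def)

lemma point_mass_PrT: "t \<in> TT \<Longrightarrow> point_mass t \<in> PrT"
  by (rule PrT_I) (auto simp: point_mass_def linfty_lincomb linfty_const)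

lemma AA_eq: "AA n = {mixture (TT_n n) p point_mass | p. distribution (TT_n n) p}"
proof -
  have "mixture (TT_n n) p point_mass = (\<lambda>f\<in>linfty. \<Sum>t\<in>TT_n n. p t * f t)" for p
    by (auto simp: mixture_def point_mass_def)
  then show ?thesis by (simp add: AA_def distribution_def)
qed

lemma AA_PrT: "\<alpha> \<in> AA n \<Longrightarrow> \<alpha> \<in> PrT"
  using mixture_PrT point_mass_PrT TT_n_subset by (force simp: AA_eq)

lemma point_mass_AA:
  assumes "t \<in> TT_n n"
  shows "point_mass t \<in> AA n"
proof -
  let ?p = "\<lambda>s. if s = t then 1 else (0::real)"
  have "(\<Sum>s\<in>TT_n n. ?p s * f s) = f t" for f
  proof -
    have "(\<Sum>s\<in>TT_n n. ?p s * f s) = (\<Sum>s\<in>TT_n n. if s = t then f s else 0)"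
      by (intro sum.cong) auto
    also have "\<dots> = f t"
      using assms by (simp add: finite_TT_n)
    finally show ?thesis .
  qed
  then have "mixture (TT_n n) ?p point_mass = point_mass t"
    by (intro ext) (simp add: mixture_def point_mass_def)
  moreover have "distribution (TT_n n) ?p"
    using assms by (simp add: distribution_def finite_TT_n)
  ultimately show ?thesis
    unfolding AA_eq by (intro CollectI exI[of _ ?p]) simp
qed

lemma AA_apply:
  "f \<in> linfty \<Longrightarrow> mixture (TT_n n) p point_mass f = (\<Sum>t\<in>TT_n n. p t * f t)"
  by (simp add: mixture_def point_mass_def)

lemma AA_abs_le:
  assumes "\<alpha> \<in> AA n" "f \<in> linfty" "\<And>t. t \<in> TT_n n \<Longrightarrow> \<bar>f t\<bar> \<le> c"
  shows "\<bar>\<alpha> f\<bar> \<le> c"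
  using assms distribution_sum_abs_le[OF finite_TT_n] by (auto simp: AA_eq AA_apply)

section \<open>Limits along an ultrafilter\<close>

definition ufilter :: "nat set set \<Rightarrow> nat filter" where
  "ufilter U = Abs_filter (\<lambda>P. {n\<in>Npos. P n} \<in> U)"

lemma ultrafilter_ND:
  assumes "ultrafilter_N U"
  shows "Npos \<in> U" "{} \<notin> U"
    "\<And>A B. A \<in> U \<Longrightarrow> B \<in> U \<Longrightarrow> A \<inter> B \<in> U"
    "\<And>A B. A \<in> U \<Longrightarrow> A \<subseteq> B \<Longrightarrow> B \<subseteq> Npos \<Longrightarrow> B \<in> U"
    "\<And>A. A \<subseteq> Npos \<Longrightarrow> A \<in> U \<or> Npos - A \<in> U"
  using assms unfolding ultrafilter_N_def by blast+

lemma eventually_ufilter: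
  assumes "ultrafilter_N U"
  shows "eventually P (ufilter U) \<longleftrightarrow> {n\<in>Npos. P n} \<in> U"
proof -
  have "is_filter (\<lambda>P. {n\<in>Npos. P n} \<in> U)"
  proof
    show "{n\<in>Npos. True} \<in> U" using ultrafilter_ND(1)[OF assms] by simp
  next
    fix P Q assume "{n\<in>Npos. P n} \<in> U" "{n\<in>Npos. Q n} \<in> U"
    then have "{n\<in>Npos. P n} \<inter> {n\<in>Npos. Q n} \<in> U" by (rule ultrafilter_ND(3)[OF assms])
    moreover have "{n\<in>Npos. P n} \<inter> {n\<in>Npos. Q n} = {n\<in>Npos. P n \<and> Q n}" by blast
    ultimately show "{n\<in>Npos. P n \<and> Q n} \<in> U" by simp
  next
    fix P Q assume "\<forall>x. P x \<longrightarrow> Q x" "{n\<in>Npos. P n} \<in> U"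
    moreover have "{n\<in>Npos. P n} \<subseteq> {n\<in>Npos. Q n}" using calculation(1) by blast
    ultimately show "{n\<in>Npos. Q n} \<in> U" using ultrafilter_ND(4)[OF assms] by blast
  qed
  then show ?thesis unfolding ufilter_def by (rule eventually_Abs_filter)
qed

lemma ufilter_ne_bot: "ultrafilter_N U \<Longrightarrow> ufilter U \<noteq> bot"
  by (simp add: trivial_limit_def eventually_ufilter ultrafilter_ND(2))

lemma ufilter_ultra:
  assumes "ultrafilter_N U"
  shows "eventually P (ufilter U) \<or> eventually (\<lambda>n. \<not> P n) (ufilter U)"
proof -
  have "{n\<in>Npos. \<not> P n} = Npos - {n\<in>Npos. P n}" by blast
  then show ?thesis using ultrafilter_ND(5)[OF assms, of "{n\<in>Npos. P n}"]
    by (simp add: eventually_ufilter[OF assms])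
qed

lemma eventually_ufilter_pos: "ultrafilter_N U \<Longrightarrow> eventually (\<lambda>n. 0 < n) (ufilter U)"
proof -
  assume U: "ultrafilter_N U"
  have "{n\<in>Npos. 0 < n} = Npos" by (auto simp: Npos_def)
  then show ?thesis using ultrafilter_ND(1)[OF U] by (simp add: eventually_ufilter[OF U])
qed

text \<open>The ultrafilter refines the neighbourhood filter of any of its cluster points, which exist by
  compactness.\<close>

lemma ufilter_convergent:
  fixes x :: "nat \<Rightarrow> real"
  assumes U: "ultrafilter_N U" and M: "\<forall>n. \<bar>x n\<bar> \<le> M"
  shows "\<exists>L. (x \<longlongrightarrow> L) (ufilter U)"
proof -
  let ?F = "filtermap x (ufilter U)"
  have "\<forall>n. x n \<in> {-M..M}"
    using M by (metis abs_le_iff atLeastAtMost_iff minus_le_iff)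
  then have "eventually (\<lambda>y. y \<in> {-M..M}) ?F"
    by (simp add: eventually_filtermap always_eventually)
  moreover have "?F \<noteq> bot" using ufilter_ne_bot[OF U] by (simp add: filtermap_bot_iff)
  ultimately obtain L where L: "inf (nhds L) ?F \<noteq> bot"
    using compact_filter[THEN iffD1, rule_format, of "{-M..M}"] by auto
  have "eventually (\<lambda>n. x n \<in> S) (ufilter U)" if "open S" "L \<in> S" for S
  proof (rule ccontr)
    assume "\<not> ?thesis"
    then have "eventually (\<lambda>y. y \<notin> S) ?F"
      using ufilter_ultra[OF U, of "\<lambda>n. x n \<in> S"] by (simp add: eventually_filtermap)
    moreover have "eventually (\<lambda>y. y \<in> S) (nhds L)"
      using that by (rule eventually_nhds_in_open)
    ultimately have "eventually (\<lambda>y. False) (inf (nhds L) ?F)"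
      unfolding eventually_inf by blast
    then show False using L by (simp add: trivial_limit_def)
  qed
  then show ?thesis by (blast intro: topological_tendstoI)
qed

definition ulim :: "nat set set \<Rightarrow> (nat \<Rightarrow> real) \<Rightarrow> real" where
  "ulim U x = Lim (ufilter U) x"

lemma ulim_eq: "ultrafilter_N U \<Longrightarrow> (x \<longlongrightarrow> L) (ufilter U) \<Longrightarrow> ulim U x = L"
  unfolding ulim_def by (intro tendsto_Lim ufilter_ne_bot)

lemma tendsto_ulim:
  "ultrafilter_N U \<Longrightarrow> \<forall>n. \<bar>x n\<bar> \<le> M \<Longrightarrow> (x \<longlongrightarrow> ulim U x) (ufilter U)"
  using ufilter_convergent ulim_eq by metis

lemma ulim_lincomb:
  assumes "ultrafilter_N U" "\<forall>n. \<bar>x n\<bar> \<le> M" "\<forall>n. \<bar>y n\<bar> \<le> N"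
  shows "ulim U (\<lambda>n. a * x n + b * y n) = a * ulim U x + b * ulim U y"
  using assms by (intro ulim_eq tendsto_intros tendsto_ulim)

lemma ulim_nonneg:
  assumes U: "ultrafilter_N U" and "\<forall>n. \<bar>x n\<bar> \<le> M" "\<And>n. 0 \<le> x n"
  shows "0 \<le> ulim U x"
  using assms by (intro tendsto_lowerbound[OF tendsto_ulim _ ufilter_ne_bot]) auto

lemma ulim_const: "ultrafilter_N U \<Longrightarrow> ulim U (\<lambda>n. c) = c"
  by (rule ulim_eq) auto

lemma ulim_zero_one:
  assumes U: "ultrafilter_N U" and "\<And>n. x n \<in> {0, 1}"
  shows "ulim U x \<in> {0, 1}"
proof -
  have "\<forall>n. \<bar>x n\<bar> \<le> 1" using assms(2) by (metis abs_0 abs_one empty_iff insert_iff order_refl zero_le_one)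
  then show ?thesis
    using assms(2) by (intro Lim_in_closed_set[OF _ _ ufilter_ne_bot[OF U] tendsto_ulim[OF U]]) auto
qed

lemma idempotent_eventually:
  assumes U: "ultrafilter_N U" and I: "idempotent_N U"
    and "eventually (\<lambda>n. eventually (\<lambda>m. P (n + m)) (ufilter U)) (ufilter U)"
  shows "eventually P (ufilter U)"
proof -
  have "{m\<in>Npos. n + m \<in> {k\<in>Npos. P k}} = {m\<in>Npos. P (n + m)}" for n
    by (auto simp: Npos_def)
  then have "{n\<in>Npos. {m\<in>Npos. n + m \<in> {k\<in>Npos. P k}} \<in> U} \<in> U"
    using assms(3) by (simp add: eventually_ufilter[OF U])
  then have "{k\<in>Npos. P k} \<in> uplus U U" by (simp add: uplus_def)
  then show ?thesis using I by (simp add: idempotent_N_def eventually_ufilter[OF U])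
qed

lemma AU_eventually_approx:
  assumes U: "ultrafilter_N U" and \<mu>: "\<mu> \<in> AU U" and Fs: "finite Fs" "Fs \<subseteq> linfty" and "0 < \<epsilon>"
  shows "eventually (\<lambda>m. \<exists>\<alpha>\<in>AA m. \<forall>f\<in>Fs. \<bar>\<alpha> f - \<mu> f\<bar> < \<epsilon>) (ufilter U)"
proof -
  define V where "V = (\<lambda>f. if f \<in> Fs then ball (\<mu> f) \<epsilon> else (UNIV::real set))"
  let ?W = "PiE linfty V \<inter> PrT"
  have "openin (product_topology (\<lambda>_. euclideanreal) linfty) (PiE linfty V)"
  proof (rule product_topology_basis)
    show "finite {f. V f \<noteq> topspace euclideanreal}"
      by (rule finite_subset[OF _ Fs(1)]) (auto simp: V_def)
  qed (simp add: V_def)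
  then have "openin weak_star ?W"
    unfolding weak_star_def openin_subtopology by blast
  moreover have "\<mu> \<in> ?W"
  proof -
    have "\<mu> \<in> PrT" using \<mu> by (simp add: AU_def)
    moreover have "\<mu> f \<in> V f" for f by (simp add: V_def \<open>0 < \<epsilon>\<close>)
    ultimately show ?thesis using PrT_D(1) by (simp add: PiE_iff)
  qed
  ultimately have "{m\<in>Npos. ?W \<inter> AA m \<noteq> {}} \<in> U"
    using \<mu> unfolding AU_def by blast
  then have "eventually (\<lambda>m. ?W \<inter> AA m \<noteq> {}) (ufilter U)"
    by (simp add: eventually_ufilter[OF U])
  then show ?thesis
  proof (rule eventually_mono)
    fix m assume "?W \<inter> AA m \<noteq> {}"
    then obtain \<alpha> where \<alpha>: "\<alpha> \<in> ?W" "\<alpha> \<in> AA m" by blast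
    have "\<bar>\<alpha> f - \<mu> f\<bar> < \<epsilon>" if "f \<in> Fs" for f
    proof -
      have "\<alpha> f \<in> V f" using \<alpha>(1) that Fs(2) by (auto simp: PiE_iff)
      then show ?thesis using that by (simp add: V_def dist_real_def abs_minus_commute)
    qed
    then show "\<exists>\<alpha>\<in>AA m. \<forall>f\<in>Fs. \<bar>\<alpha> f - \<mu> f\<bar> < \<epsilon>" using \<alpha>(2) by blast
  qed
qed

lemma AU_I:
  assumes U: "ultrafilter_N U" and \<mu>: "\<mu> \<in> PrT"
    and approx: "\<And>Fs \<epsilon>. finite Fs \<Longrightarrow> Fs \<subseteq> linfty \<Longrightarrow> 0 < \<epsilon> \<Longrightarrow>
              eventually (\<lambda>m. \<exists>\<alpha>\<in>AA m. \<forall>f\<in>Fs. \<bar>\<alpha> f - \<mu> f\<bar> < \<epsilon>) (ufilter U)"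
  shows "\<mu> \<in> AU U"
proof -
  have "{m\<in>Npos. W \<inter> AA m \<noteq> {}} \<in> U" if W: "openin weak_star W" "\<mu> \<in> W" for W
  proof -
    obtain T where T: "openin (product_topology (\<lambda>_. euclideanreal) linfty) T" "W = T \<inter> PrT"
      using W(1) unfolding weak_star_def openin_subtopology by blast
    have "\<mu> \<in> T" using W(2) T(2) by blast
    from product_topology_open_contains_basis[OF T(1) this] obtain V where
      V: "\<mu> \<in> PiE linfty V" "\<And>f. openin euclideanreal (V f)"
         "finite {f. V f \<noteq> topspace euclideanreal}" "PiE linfty V \<subseteq> T"
      by blast
    define Fs where "Fs = {f. V f \<noteq> UNIV} \<inter> linfty"
    have Fs: "finite Fs" "Fs \<subseteq> linfty"
      using V(3) by (simp_all add: Fs_def)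
    have "\<exists>e>0. ball (\<mu> f) e \<subseteq> V f" if "f \<in> Fs" for f
    proof -
      have "\<mu> f \<in> V f" using V(1) that by (auto simp: Fs_def PiE_iff)
      moreover have "open (V f)" using V(2)[of f] by simp
      ultimately show ?thesis by (simp add: open_contains_ball)
    qed
    then obtain e where e: "\<And>f. f \<in> Fs \<Longrightarrow> 0 < e f \<and> ball (\<mu> f) (e f) \<subseteq> V f"
      by metis
    define \<epsilon> where "\<epsilon> = Min (insert 1 (e ` Fs))"
    have \<epsilon>: "0 < \<epsilon>" "\<And>f. f \<in> Fs \<Longrightarrow> \<epsilon> \<le> e f"
      using Fs(1) e by (simp_all add: \<epsilon>_def)
    have "eventually (\<lambda>m. W \<inter> AA m \<noteq> {}) (ufilter U)"
      using approx[OF Fs \<epsilon>(1)]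
    proof (rule eventually_mono)
      fix m assume "\<exists>\<alpha>\<in>AA m. \<forall>f\<in>Fs. \<bar>\<alpha> f - \<mu> f\<bar> < \<epsilon>"
      then obtain \<alpha> where \<alpha>: "\<alpha> \<in> AA m" "\<forall>f\<in>Fs. \<bar>\<alpha> f - \<mu> f\<bar> < \<epsilon>" by blast
      have "\<alpha> f \<in> V f" if "f \<in> linfty" for f
      proof (cases "V f = UNIV")
        case False
        then have f: "f \<in> Fs" using that by (simp add: Fs_def)
        then have "\<bar>\<alpha> f - \<mu> f\<bar> < e f" using \<alpha>(2) \<epsilon>(2)[OF f] by fastforce
        then have "\<alpha> f \<in> ball (\<mu> f) (e f)" by (simp add: dist_real_def abs_minus_commute)
        then show ?thesis using e[OF f] by blast
      qed simp
      then have "\<alpha> \<in> PiE linfty V"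
        using PrT_D(1)[OF AA_PrT[OF \<alpha>(1)]] by (simp add: PiE_iff)
      then show "W \<inter> AA m \<noteq> {}"
        using V(4) T(2) AA_PrT[OF \<alpha>(1)] \<alpha>(1) by blast
    qed
    then show ?thesis by (simp add: eventually_ufilter[OF U])
  qed
  then show ?thesis using \<mu> by (simp add: AU_def)
qed

lemma AU_PrT: "\<mu> \<in> AU U \<Longrightarrow> \<mu> \<in> PrT"
  by (simp add: AU_def)

definition zero_one :: "functional \<Rightarrow> bool" where
  "zero_one \<mu> \<longleftrightarrow> (\<forall>E. meas \<mu> E \<in> {0, 1})"

text \<open>\<open>comb (n - 1)\<close> has \<open>n\<close> leaves, so its point mass lies in \<open>AA n\<close>.\<close>

definition comb_limit :: "nat set set \<Rightarrow> functional" where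
  "comb_limit U = (\<lambda>f\<in>linfty. ulim U (\<lambda>n. f (comb (n - 1))))"

lemma comb_values_bounded: "f \<in> linfty \<Longrightarrow> \<exists>M. \<forall>n. \<bar>f (comb (n - 1))\<bar> \<le> M"
  using linfty_bounded comb_in_TT by metis

lemma comb_limit_PrT:
  assumes U: "ultrafilter_N U"
  shows "comb_limit U \<in> PrT"
proof (rule PrT_I)
  fix f g a b assume fg: "f \<in> linfty" "g \<in> linfty"
  obtain M N where "\<forall>n. \<bar>f (comb (n - 1))\<bar> \<le> M" "\<forall>n. \<bar>g (comb (n - 1))\<bar> \<le> N"
    using comb_values_bounded fg by metis
  then show "comb_limit U (restrict (\<lambda>t. a * f t + b * g t) TT) = a * comb_limit U f + b * comb_limit U g"
    using fg linfty_lincomb[OF fg] ulim_lincomb[OF U] by (simp add: comb_limit_def comb_in_TT)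
next
  fix f assume f: "f \<in> linfty" "\<forall>t\<in>TT. 0 \<le> f t"
  obtain M where "\<forall>n. \<bar>f (comb (n - 1))\<bar> \<le> M"
    using comb_values_bounded f(1) by blast
  then have "0 \<le> ulim U (\<lambda>n. f (comb (n - 1)))"
    using f(2) comb_in_TT by (intro ulim_nonneg[OF U]) auto
  then show "0 \<le> comb_limit U f"
    using f(1) by (simp add: comb_limit_def)
qed (use linfty_const ulim_const[OF U] in \<open>simp_all add: comb_limit_def comb_in_TT\<close>)

lemma comb_limit_zero_one: "ultrafilter_N U \<Longrightarrow> zero_one (comb_limit U)"
  unfolding zero_one_def
proof
  fix E assume U: "ultrafilter_N U"
  have "meas (comb_limit U) E = ulim U (\<lambda>n. indicator E (comb (n - 1)))"
    using linfty_indicator by (simp add: meas_def comb_limit_def comb_in_TT)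
  also have "\<dots> \<in> {0, 1}"
    by (rule ulim_zero_one[OF U]) (simp add: indicator_def)
  finally show "meas (comb_limit U) E \<in> {0, 1}" .
qed

lemma comb_limit_AU:
  assumes U: "ultrafilter_N U"
  shows "comb_limit U \<in> AU U"
proof (rule AU_I[OF U comb_limit_PrT[OF U]])
  fix Fs \<epsilon> assume Fs: "finite Fs" "Fs \<subseteq> linfty" and "(0::real) < \<epsilon>"
  have "\<forall>f\<in>Fs. eventually (\<lambda>n. \<bar>f (comb (n - 1)) - comb_limit U f\<bar> < \<epsilon>) (ufilter U)"
  proof
    fix f assume f: "f \<in> Fs"
    obtain M where "\<forall>n. \<bar>f (comb (n - 1))\<bar> \<le> M"
      using comb_values_bounded f Fs(2) by blast
    then have "((\<lambda>n. f (comb (n - 1))) \<longlongrightarrow> comb_limit U f) (ufilter U)"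
      using tendsto_ulim[OF U] f Fs(2) by (auto simp: comb_limit_def)
    then show "eventually (\<lambda>n. \<bar>f (comb (n - 1)) - comb_limit U f\<bar> < \<epsilon>) (ufilter U)"
      using \<open>0 < \<epsilon>\<close> by (simp add: tendsto_iff dist_real_def)
  qed
  then have "eventually (\<lambda>n. \<forall>f\<in>Fs. \<bar>f (comb (n - 1)) - comb_limit U f\<bar> < \<epsilon>) (ufilter U)"
    by (rule eventually_ball_finite[OF Fs(1)])
  then have "eventually (\<lambda>n. 0 < n \<and> (\<forall>f\<in>Fs. \<bar>f (comb (n - 1)) - comb_limit U f\<bar> < \<epsilon>)) (ufilter U)"
    using eventually_ufilter_pos[OF U] by (simp add: eventually_conj_iff)
  then show "eventually (\<lambda>m. \<exists>\<alpha>\<in>AA m. \<forall>f\<in>Fs. \<bar>\<alpha> f - comb_limit U f\<bar> < \<epsilon>) (ufilter U)"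
  proof (rule eventually_mono)
    fix n assume n: "0 < n \<and> (\<forall>f\<in>Fs. \<bar>f (comb (n - 1)) - comb_limit U f\<bar> < \<epsilon>)"
    then have "point_mass (comb (n - 1)) \<in> AA n"
      using comb_in_TT_n[of "n - 1"] by (intro point_mass_AA) simp
    then show "\<exists>\<alpha>\<in>AA n. \<forall>f\<in>Fs. \<bar>\<alpha> f - comb_limit U f\<bar> < \<epsilon>"
      using n Fs(2) by (intro bexI[of _ "point_mass (comb (n - 1))"]) (auto simp: point_mass_def)
  qed
qed

section \<open>The product of functionals\<close>

definition hat_section :: "real set \<Rightarrow> (real set \<Rightarrow> real) \<Rightarrow> real set \<Rightarrow> real" where
  "hat_section x f = restrict (\<lambda>y. f (hat x y)) TT"

definition hat_integral :: "functional \<Rightarrow> (real set \<Rightarrow> real) \<Rightarrow> real set \<Rightarrow> real" where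
  "hat_integral \<nu> f = restrict (\<lambda>x. \<nu> (hat_section x f)) TT"

lemma hatm_eq: "f \<in> linfty \<Longrightarrow> hatm \<mu> \<nu> f = \<mu> (hat_integral \<nu> f)"
  by (simp add: hatm_def hat_integral_def hat_section_def)

lemma hat_section_linfty:
  assumes "f \<in> linfty" "x \<in> TT"
  shows "hat_section x f \<in> linfty"
proof -
  obtain M where "\<forall>t\<in>TT. \<bar>f t\<bar> \<le> M" using linfty_bounded[OF assms(1)] by blast
  then show ?thesis
    unfolding hat_section_def using assms(2) TT.hat by (intro restrict_in_linfty) blast
qed

lemma hat_integral_linfty:
  assumes "\<nu> \<in> PrT" "f \<in> linfty"
  shows "hat_integral \<nu> f \<in> linfty"
proof -
  obtain M where M: "\<forall>t\<in>TT. \<bar>f t\<bar> \<le> M" using linfty_bounded[OF assms(2)] by blast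
  have "\<bar>\<nu> (hat_section x f)\<bar> \<le> M" if "x \<in> TT" for x
    using M that TT.hat
    by (intro PrT_abs_le[OF assms(1) hat_section_linfty[OF assms(2) that]]) (simp add: hat_section_def)
  then show ?thesis unfolding hat_integral_def by (rule restrict_in_linfty)
qed

lemma hatm_PrT:
  assumes \<mu>: "\<mu> \<in> PrT" and \<nu>: "\<nu> \<in> PrT"
  shows "hatm \<mu> \<nu> \<in> PrT"
proof (rule PrT_I)
  fix f g a b assume fg: "f \<in> linfty" "g \<in> linfty"
  let ?h = "restrict (\<lambda>t. a * f t + b * g t) TT"
  have "\<nu> (hat_section x ?h) = a * hat_integral \<nu> f x + b * hat_integral \<nu> g x" if x: "x \<in> TT" for x
  proof -
    have "\<nu> (hat_section x ?h) = a * \<nu> (hat_section x f) + b * \<nu> (hat_section x g)"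
      unfolding hat_section_def[of x ?h]
      using x TT.hat hat_section_linfty[OF fg(1) x] hat_section_linfty[OF fg(2) x]
      by (intro PrT_lincomb[OF \<nu>]) (auto simp: hat_section_def)
    then show ?thesis using x by (simp add: hat_integral_def)
  qed
  then have "\<mu> (hat_integral \<nu> ?h) = a * \<mu> (hat_integral \<nu> f) + b * \<mu> (hat_integral \<nu> g)"
    unfolding hat_integral_def[of \<nu> ?h]
    by (intro PrT_lincomb[OF \<mu> hat_integral_linfty[OF \<nu> fg(1)] hat_integral_linfty[OF \<nu> fg(2)]])
  then show "hatm \<mu> \<nu> ?h = a * hatm \<mu> \<nu> f + b * hatm \<mu> \<nu> g"
    using fg linfty_lincomb[OF fg] by (simp add: hatm_eq)
next
  fix f assume f: "f \<in> linfty" "\<forall>t\<in>TT. 0 \<le> f t"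
  have "0 \<le> \<nu> (hat_section x f)" if "x \<in> TT" for x
    using f that TT.hat
    by (intro PrT_nonneg[OF \<nu> hat_section_linfty[OF f(1) that]]) (simp add: hat_section_def)
  then have "0 \<le> \<mu> (hat_integral \<nu> f)"
    by (intro PrT_nonneg[OF \<mu> hat_integral_linfty[OF \<nu> f(1)]]) (simp add: hat_integral_def)
  then show "0 \<le> hatm \<mu> \<nu> f" using f(1) by (simp add: hatm_eq)
next
  have "hat_integral \<nu> (restrict (\<lambda>_. 1) TT) = restrict (\<lambda>_. 1) TT"
    unfolding hat_integral_def
  proof (rule restrict_ext)
    fix x assume "x \<in> TT"
    then have "hat_section x (restrict (\<lambda>_. 1) TT) = restrict (\<lambda>_. 1) TT"
      unfolding hat_section_def using TT.hat by (intro restrict_ext) simp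
    then show "\<nu> (hat_section x (restrict (\<lambda>_. 1) TT)) = 1"
      using PrT_D(4)[OF \<nu>] by simp
  qed
  then show "hatm \<mu> \<nu> (restrict (\<lambda>_. 1) TT) = 1"
    using linfty_const PrT_D(4)[OF \<mu>] by (simp add: hatm_eq)
qed (simp add: hatm_def)

lemma hatm_mixture_point_mass:
  assumes f: "f \<in> linfty" and q: "distribution (TT_n m) q"
  shows "hatm (mixture (TT_n n) p point_mass) (mixture (TT_n m) q point_mass) f
    = (\<Sum>x\<in>TT_n n. \<Sum>y\<in>TT_n m. p x * q y * f (hat x y))"
proof -
  let ?\<beta> = "mixture (TT_n m) q point_mass"
  have inner: "hat_integral ?\<beta> f x = (\<Sum>y\<in>TT_n m. q y * f (hat x y))" if "x \<in> TT_n n" for x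
  proof -
    have x: "x \<in> TT" using that TT_n_subset by blast
    then have "hat_integral ?\<beta> f x = (\<Sum>y\<in>TT_n m. q y * hat_section x f y)"
      using hat_section_linfty[OF f x] by (simp add: hat_integral_def mixture_def point_mass_def)
    also have "\<dots> = (\<Sum>y\<in>TT_n m. q y * f (hat x y))"
      using TT_n_subset by (intro sum.cong refl) (auto simp: hat_section_def)
    finally show ?thesis .
  qed
  have "hat_integral ?\<beta> f \<in> linfty"
    using f mixture_PrT[OF q] point_mass_PrT TT_n_subset by (intro hat_integral_linfty) auto
  then have "hatm (mixture (TT_n n) p point_mass) ?\<beta> f = (\<Sum>x\<in>TT_n n. p x * hat_integral ?\<beta> f x)"
    using f by (simp add: hatm_eq mixture_def[of "TT_n n" p] point_mass_def)
  also have "\<dots> = (\<Sum>x\<in>TT_n n. p x * (\<Sum>y\<in>TT_n m. q y * f (hat x y)))"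
    using inner by (intro sum.cong refl) simp
  also have "\<dots> = (\<Sum>x\<in>TT_n n. \<Sum>y\<in>TT_n m. p x * q y * f (hat x y))"
    by (simp add: sum_distrib_left mult.assoc)
  finally show ?thesis .
qed

lemma AA_hatm:
  assumes "\<alpha> \<in> AA n" "\<beta> \<in> AA m"
  shows "hatm \<alpha> \<beta> \<in> AA (n + m)"
proof -
  obtain p q where \<alpha>: "\<alpha> = mixture (TT_n n) p point_mass" "distribution (TT_n n) p"
    and \<beta>: "\<beta> = mixture (TT_n m) q point_mass" "distribution (TT_n m) q"
    using assms by (auto simp: AA_eq)
  define S where "S = TT_n n \<times> TT_n m"
  define r where "r t = (\<Sum>z\<in>{z\<in>S. hat (fst z) (snd z) = t}. p (fst z) * q (snd z))" for t
  have S: "finite S" "(\<lambda>z. hat (fst z) (snd z)) ` S \<subseteq> TT_n (n + m)"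
    by (auto simp: S_def finite_TT_n hat_in_TT_n)
  have grouped: "(\<Sum>x\<in>TT_n n. \<Sum>y\<in>TT_n m. p x * q y * F (hat x y)) = (\<Sum>t\<in>TT_n (n + m). r t * F t)"
    for F
  proof -
    have "(\<Sum>x\<in>TT_n n. \<Sum>y\<in>TT_n m. p x * q y * F (hat x y))
        = (\<Sum>z\<in>S. p (fst z) * q (snd z) * F (hat (fst z) (snd z)))"
      by (simp add: S_def sum.cartesian_product case_prod_beta)
    also have "\<dots> = (\<Sum>t\<in>TT_n (n + m).
        \<Sum>z\<in>{z\<in>S. hat (fst z) (snd z) = t}. p (fst z) * q (snd z) * F (hat (fst z) (snd z)))"
      by (rule sum.group[OF S(1) finite_TT_n S(2), symmetric])
    also have "\<dots> = (\<Sum>t\<in>TT_n (n + m). r t * F t)"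
      by (auto simp: r_def sum_distrib_right intro!: sum.cong)
    finally show ?thesis .
  qed
  have "hatm \<alpha> \<beta> f = mixture (TT_n (n + m)) r point_mass f" if f: "f \<in> linfty" for f
  proof -
    have "hatm \<alpha> \<beta> f = (\<Sum>x\<in>TT_n n. \<Sum>y\<in>TT_n m. p x * q y * f (hat x y))"
      using hatm_mixture_point_mass[OF f \<beta>(2)] by (simp add: \<alpha>(1) \<beta>(1))
    also have "\<dots> = mixture (TT_n (n + m)) r point_mass f"
      using f by (simp add: grouped mixture_def point_mass_def)
    finally show ?thesis .
  qed
  then have "hatm \<alpha> \<beta> = mixture (TT_n (n + m)) r point_mass"
    by (intro ext) (simp add: hatm_def mixture_def)
  moreover have "distribution (TT_n (n + m)) r"
  proof -
    have "(\<Sum>t\<in>TT_n (n + m). r t) = (\<Sum>x\<in>TT_n n. p x) * (\<Sum>y\<in>TT_n m. q y)"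
      using grouped[of "\<lambda>_. 1"] by (simp add: sum_product)
    then show ?thesis
      using \<alpha>(2) \<beta>(2) by (auto simp: distribution_def r_def S_def intro!: sum_nonneg)
  qed
  ultimately show ?thesis by (auto simp: AA_eq)
qed

lemma hatm_AA_dist_le:
  assumes "\<alpha> \<in> AA n" "\<beta> \<in> PrT" "\<nu> \<in> PrT" "f \<in> linfty"
    and "\<And>x. x \<in> TT_n n \<Longrightarrow> \<bar>\<beta> (hat_section x f) - \<nu> (hat_section x f)\<bar> \<le> c"
  shows "\<bar>hatm \<alpha> \<beta> f - hatm \<alpha> \<nu> f\<bar> \<le> c"
proof -
  let ?d = "restrict (\<lambda>x. 1 * hat_integral \<beta> f x + (-1) * hat_integral \<nu> f x) TT"
  have "hatm \<alpha> \<beta> f - hatm \<alpha> \<nu> f = \<alpha> ?d"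
    using PrT_D(2)[OF AA_PrT[OF assms(1)] hat_integral_linfty[OF assms(2,4)]
        hat_integral_linfty[OF assms(3,4)], of 1 "-1"]
    by (simp add: hatm_eq assms(4))
  also have "\<bar>\<alpha> ?d\<bar> \<le> c"
    using assms(5) TT_n_subset
    by (intro AA_abs_le[OF assms(1) linfty_lincomb[OF hat_integral_linfty hat_integral_linfty]] assms(2-4))
      (auto simp: hat_integral_def)
  finally show ?thesis .
qed

text \<open>Idempotence of \<open>U\<close> enters here: approximants of \<open>\<mu>\<close> from \<open>AA n\<close> and of \<open>\<nu>\<close>
  from \<open>AA m\<close> multiply to approximants of \<open>hatm \<mu> \<nu>\<close> from \<open>AA (n + m)\<close>.\<close>

lemma hatm_AU:
  assumes U: "ultrafilter_N U" and I: "idempotent_N U" and \<mu>: "\<mu> \<in> AU U" and \<nu>: "\<nu> \<in> AU U"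
  shows "hatm \<mu> \<nu> \<in> AU U"
proof -
  have \<mu>P: "\<mu> \<in> PrT" and \<nu>P: "\<nu> \<in> PrT" using \<mu> \<nu> by (auto dest: AU_PrT)
  show ?thesis
  proof (rule AU_I[OF U hatm_PrT[OF \<mu>P \<nu>P]])
    fix Fs \<epsilon> assume Fs: "finite Fs" "Fs \<subseteq> linfty" and "(0::real) < \<epsilon>"
    let ?P = "\<lambda>N. \<exists>\<gamma>\<in>AA N. \<forall>f\<in>Fs. \<bar>\<gamma> f - hatm \<mu> \<nu> f\<bar> < \<epsilon>"
    have "eventually (\<lambda>m. ?P (n + m)) (ufilter U)"
      if \<alpha>: "\<alpha> \<in> AA n" "\<forall>g\<in>hat_integral \<nu> ` Fs. \<bar>\<alpha> g - \<mu> g\<bar> < \<epsilon> / 2" for n \<alpha>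
    proof -
      let ?H = "(\<lambda>(x, f). hat_section x f) ` (TT_n n \<times> Fs)"
      have "finite ?H" "?H \<subseteq> linfty"
        using Fs finite_TT_n TT_n_subset by (auto intro!: hat_section_linfty)
      then have "eventually (\<lambda>m. \<exists>\<beta>\<in>AA m. \<forall>h\<in>?H. \<bar>\<beta> h - \<nu> h\<bar> < \<epsilon> / 2) (ufilter U)"
        using \<open>0 < \<epsilon>\<close> by (intro AU_eventually_approx[OF U \<nu>]) auto
      then show ?thesis
      proof (rule eventually_mono)
        fix m assume "\<exists>\<beta>\<in>AA m. \<forall>h\<in>?H. \<bar>\<beta> h - \<nu> h\<bar> < \<epsilon> / 2"
        then obtain \<beta> where \<beta>: "\<beta> \<in> AA m" "\<forall>h\<in>?H. \<bar>\<beta> h - \<nu> h\<bar> < \<epsilon> / 2" by blast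
        have "\<bar>hatm \<alpha> \<beta> f - hatm \<mu> \<nu> f\<bar> < \<epsilon>" if f: "f \<in> Fs" for f
        proof -
          have "\<bar>\<beta> (hat_section x f) - \<nu> (hat_section x f)\<bar> \<le> \<epsilon> / 2" if "x \<in> TT_n n" for x
            using \<beta>(2) that f by (metis (no_types, lifting) less_imp_le SigmaI case_prod_conv image_eqI)
          then have "\<bar>hatm \<alpha> \<beta> f - hatm \<alpha> \<nu> f\<bar> \<le> \<epsilon> / 2"
            using f Fs(2) by (intro hatm_AA_dist_le[OF \<alpha>(1) AA_PrT[OF \<beta>(1)] \<nu>P]) auto
          moreover have "\<bar>hatm \<alpha> \<nu> f - hatm \<mu> \<nu> f\<bar> < \<epsilon> / 2"
            using \<alpha>(2) f Fs(2) by (auto simp: hatm_eq)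
          ultimately show ?thesis by linarith
        qed
        then show "?P (n + m)" using AA_hatm[OF \<alpha>(1) \<beta>(1)] by blast
      qed
    qed
    moreover have "eventually (\<lambda>n. \<exists>\<alpha>\<in>AA n. \<forall>g\<in>hat_integral \<nu> ` Fs. \<bar>\<alpha> g - \<mu> g\<bar> < \<epsilon> / 2) (ufilter U)"
      using Fs hat_integral_linfty[OF \<nu>P] \<open>0 < \<epsilon>\<close> by (intro AU_eventually_approx[OF U \<mu>]) auto
    ultimately have "eventually (\<lambda>n. eventually (\<lambda>m. ?P (n + m)) (ufilter U)) (ufilter U)"
      by (auto elim: eventually_mono)
    then show "eventually ?P (ufilter U)" by (rule idempotent_eventually[OF U I])
  qed
qed

lemma hatm_zero_one:
  assumes "zero_one \<mu>" "zero_one \<nu>"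
  shows "zero_one (hatm \<mu> \<nu>)"
  unfolding zero_one_def
proof
  fix E
  define E' where "E' = {x. meas \<nu> {y. hat x y \<in> E} = 1}"
  have "hat_integral \<nu> (restrict (indicator E) TT) = restrict (indicator E') TT"
    unfolding hat_integral_def
  proof (rule restrict_ext)
    fix x assume "x \<in> TT"
    then have "hat_section x (restrict (indicator E) TT) = restrict (indicator {y. hat x y \<in> E}) TT"
      unfolding hat_section_def using TT.hat by (intro restrict_ext) (simp add: indicator_def)
    moreover have "meas \<nu> {y. hat x y \<in> E} \<in> {0, 1}"
      using assms(2) by (simp add: zero_one_def)
    ultimately show "\<nu> (hat_section x (restrict (indicator E) TT)) = indicator E' x"
      by (auto simp: meas_def E'_def indicator_def)
  qed
  then have "meas (hatm \<mu> \<nu>) E = meas \<mu> E'"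
    using linfty_indicator by (simp add: meas_def hatm_eq)
  then show "meas (hatm \<mu> \<nu>) E \<in> {0, 1}"
    using assms(1) by (simp add: zero_one_def)
qed

lemma AA_mixture:
  assumes "finite J" "distribution J a" "\<forall>i\<in>J. Q i \<in> AA m"
  shows "mixture J a Q \<in> AA m"
proof -
  have "\<forall>i\<in>J. \<exists>q. Q i = mixture (TT_n m) q point_mass \<and> distribution (TT_n m) q"
    using assms(3) by (auto simp: AA_eq)
  then obtain q where q: "\<And>i. i \<in> J \<Longrightarrow> Q i = mixture (TT_n m) (q i) point_mass"
    "\<And>i. i \<in> J \<Longrightarrow> distribution (TT_n m) (q i)"
    by metis
  define r where "r t = (\<Sum>i\<in>J. a i * q i t)" for t
  have "mixture J a Q f = mixture (TT_n m) r point_mass f" if "f \<in> linfty" for f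
  proof -
    have "mixture J a Q f = (\<Sum>i\<in>J. a i * (\<Sum>t\<in>TT_n m. q i t * f t))"
      using that q(1) by (simp add: mixture_def point_mass_def)
    also have "\<dots> = (\<Sum>t\<in>TT_n m. r t * f t)"
      by (simp add: r_def sum_distrib_left sum_distrib_right mult.assoc sum.swap[of _ J])
    finally show ?thesis
      using that by (simp add: mixture_def point_mass_def)
  qed
  then have "mixture J a Q = mixture (TT_n m) r point_mass"
    by (intro ext) (simp add: mixture_def)
  moreover have "distribution (TT_n m) r"
  proof -
    have "(\<Sum>t\<in>TT_n m. r t) = (\<Sum>i\<in>J. a i * (\<Sum>t\<in>TT_n m. q i t))"
      by (simp add: r_def sum_distrib_left sum.swap[of _ "TT_n m"])
    also have "\<dots> = 1"
      using q(2) assms(2) by (simp add: distribution_def)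
    finally show ?thesis
      using q(2) assms(2) by (auto simp: distribution_def r_def intro!: sum_nonneg)
  qed
  ultimately show ?thesis by (auto simp: AA_eq)
qed

lemma mixture_AU:
  assumes U: "ultrafilter_N U" and J: "finite J" "distribution J a" and P: "\<forall>i\<in>J. P i \<in> AU U"
  shows "mixture J a P \<in> AU U"
proof (rule AU_I[OF U mixture_PrT[OF J(2)]])
  show "\<forall>i\<in>J. P i \<in> PrT" using P by (auto dest: AU_PrT)
next
  fix Fs \<epsilon> assume Fs: "finite Fs" "Fs \<subseteq> linfty" and "(0::real) < \<epsilon>"
  have "\<forall>i\<in>J. eventually (\<lambda>m. \<exists>\<beta>\<in>AA m. \<forall>f\<in>Fs. \<bar>\<beta> f - P i f\<bar> < \<epsilon> / 2) (ufilter U)"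
    using P \<open>0 < \<epsilon>\<close> by (intro ballI AU_eventually_approx[OF U _ Fs]) auto
  then have "eventually (\<lambda>m. \<forall>i\<in>J. \<exists>\<beta>\<in>AA m. \<forall>f\<in>Fs. \<bar>\<beta> f - P i f\<bar> < \<epsilon> / 2) (ufilter U)"
    by (rule eventually_ball_finite[OF J(1)])
  then show "eventually (\<lambda>m. \<exists>\<alpha>\<in>AA m. \<forall>f\<in>Fs. \<bar>\<alpha> f - mixture J a P f\<bar> < \<epsilon>) (ufilter U)"
  proof (rule eventually_mono)
    fix m assume "\<forall>i\<in>J. \<exists>\<beta>\<in>AA m. \<forall>f\<in>Fs. \<bar>\<beta> f - P i f\<bar> < \<epsilon> / 2"
    then obtain Q where Q: "\<And>i. i \<in> J \<Longrightarrow> Q i \<in> AA m"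
      "\<And>i f. i \<in> J \<Longrightarrow> f \<in> Fs \<Longrightarrow> \<bar>Q i f - P i f\<bar> < \<epsilon> / 2"
      by metis
    have "\<bar>mixture J a Q f - mixture J a P f\<bar> < \<epsilon>" if f: "f \<in> Fs" for f
    proof -
      have "\<bar>mixture J a Q f - mixture J a P f\<bar> = \<bar>\<Sum>i\<in>J. a i * (Q i f - P i f)\<bar>"
        using f Fs(2) by (auto simp: mixture_def sum_subtractf right_diff_distrib)
      also have "\<dots> \<le> \<epsilon> / 2"
        using Q(2) f by (intro distribution_sum_abs_le[OF J]) (simp add: less_imp_le)
      finally show ?thesis using \<open>0 < \<epsilon>\<close> by linarith
    qed
    then show "\<exists>\<alpha>\<in>AA m. \<forall>f\<in>Fs. \<bar>\<alpha> f - mixture J a P f\<bar> < \<epsilon>"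
      using AA_mixture[OF J] Q(1) by blast
  qed
qed

lemma meas_mixture: "meas (mixture J a P) E = (\<Sum>i\<in>J. a i * meas (P i) E)"
  using linfty_indicator by (simp add: meas_def mixture_def)

lemma meas_hatm_mixture:
  assumes J: "finite J" "distribution J a" and P: "\<forall>i\<in>J. P i \<in> PrT"
  shows "meas (hatm (mixture J a P) (mixture J a P)) E
    = (\<Sum>i\<in>J. \<Sum>j\<in>J. a i * a j * meas (hatm (P i) (P j)) E)"
proof -
  let ?\<mu> = "mixture J a P"
  let ?e = "restrict (indicator E) TT"
  have "P i (hat_integral ?\<mu> ?e) = (\<Sum>j\<in>J. a j * meas (hatm (P i) (P j)) E)" if i: "i \<in> J" for i
  proof -
    have "P i (hat_integral ?\<mu> ?e) = (\<Sum>j\<in>J. a j * P i (hat_integral (P j) ?e))"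
      unfolding hat_integral_def[of ?\<mu> ?e]
    proof (rule PrT_sum[OF _ J(1)])
      show "P i \<in> PrT" using P i by blast
      show "\<forall>j\<in>J. hat_integral (P j) ?e \<in> linfty"
        using P hat_integral_linfty linfty_indicator by blast
    next
      fix x assume x: "x \<in> TT"
      show "?\<mu> (hat_section x ?e) = (\<Sum>j\<in>J. a j * hat_integral (P j) ?e x)"
        using hat_section_linfty[OF linfty_indicator x] x by (simp add: mixture_def hat_integral_def)
    qed
    then show ?thesis
      using linfty_indicator by (simp add: meas_def hatm_eq)
  qed
  then have "meas (hatm ?\<mu> ?\<mu>) E = (\<Sum>i\<in>J. a i * (\<Sum>j\<in>J. a j * meas (hatm (P i) (P j)) E))"
    using linfty_indicator hat_integral_linfty[OF mixture_PrT[OF J(2) P] linfty_indicator]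
    by (simp add: meas_def hatm_eq mixture_def)
  then show ?thesis
    by (simp add: sum_distrib_left mult.assoc)
qed

section \<open>Brouwer's fixed point theorem for the disc and the simplex\<close>

definition disc :: "nat \<Rightarrow> (nat \<Rightarrow> real) set" where
  "disc n = {x. (\<Sum>i\<le>n. x i ^ 2) \<le> 1 \<and> (\<forall>i>n. x i = 0)}"

abbreviation disc_topology :: "nat \<Rightarrow> (nat \<Rightarrow> real) topology" where
  "disc_topology n \<equiv> subtopology (powertop_real UNIV) (disc n)"

lemma topspace_nsphere_eq: "topspace (nsphere n) = {x. (\<Sum>i\<le>n. x i ^ 2) = 1 \<and> (\<forall>i>n. x i = 0)}"
  by (simp add: nsphere)

lemma continuous_map_powertop_subtopology_projection [continuous_intros]:
  "continuous_map (subtopology (powertop_real UNIV) S) euclideanreal (\<lambda>x. x i)"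
  by (rule continuous_map_from_subtopology[OF continuous_map_product_projection]) simp

lemma continuous_map_normalize_nsphere:
  "continuous_map (subtopology (Euclidean_space (Suc n)) (- {\<lambda>i. 0})) (nsphere n)
     (\<lambda>x i. x i / sqrt (\<Sum>j\<le>n. x j ^ 2))"
proof -
  have *: "\<lbrakk>\<forall>i\<ge>Suc n. x i = 0; x \<noteq> (\<lambda>i. 0)\<rbrakk> \<Longrightarrow> (\<Sum>j\<le>n. (x j)\<^sup>2) \<noteq> 0" for x :: "nat \<Rightarrow> real"
    by (force simp: fun_eq_iff not_less_eq_eq sum_nonneg_eq_0_iff)
  show ?thesis
    apply (simp add: Euclidean_space_def continuous_map_in_subtopology continuous_map_componentwise_UNIV
        nsphere continuous_map_componentwise subtopology_subtopology)
    apply (intro conjI allI continuous_intros continuous_map_from_subtopology [OF continuous_map_product_projection])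
      apply (simp_all add: *)
    apply (force simp: sum_nonneg fun_eq_iff not_less_eq_eq sum_nonneg_eq_0_iff power_divide simp flip: sum_divide_distrib)
    done
qed

lemma fixpoint_free_homotopy_nonzero:
  assumes g: "\<And>y. y \<in> disc n \<Longrightarrow> g y \<in> disc n \<and> g y \<noteq> y"
    and x: "x \<in> topspace (nsphere n)"
    and sr: "0 \<le> s" "s \<le> 1" "0 \<le> r" "r \<le> 1" "r < 1 \<Longrightarrow> s = 1"
  shows "(\<lambda>i. s * x i - r * g (\<lambda>k. s * x k) i) \<noteq> (\<lambda>i. 0)"
proof
  define y where "y = (\<lambda>k. s * x k)"
  assume zero: "(\<lambda>i. s * x i - r * g (\<lambda>k. s * x k) i) = (\<lambda>i. 0)"
  have eq: "y i = r * g y i" for i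
    unfolding y_def using fun_cong[OF zero, of i] by (simp only: right_minus_eq)
  have x1: "(\<Sum>i\<le>n. x i ^ 2) = 1" "\<forall>i>n. x i = 0"
    using x by (auto simp: topspace_nsphere_eq)
  have "(\<Sum>i\<le>n. y i ^ 2) = s ^ 2 * (\<Sum>i\<le>n. x i ^ 2)"
    by (simp add: y_def power_mult_distrib sum_distrib_left)
  also have "\<dots> \<le> 1"
    using x1 sr(1,2) by (simp add: power_le_one)
  finally have y: "y \<in> disc n"
    using x1 by (simp add: disc_def y_def)
  show False
  proof (cases "r < 1")
    case True
    have "1 = (\<Sum>i\<le>n. y i ^ 2)"
      using x1(1) sr(5)[OF True] by (simp add: y_def)
    also have "\<dots> = r ^ 2 * (\<Sum>i\<le>n. g y i ^ 2)"
      by (subst eq) (simp add: power_mult_distrib sum_distrib_left)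
    also have "\<dots> \<le> r ^ 2"
      using g[OF y] sr(3) by (intro mult_left_le) (auto simp: disc_def)
    also have "\<dots> < 1"
      using sr(3) True by (simp add: power_less_one_iff)
    finally show False by simp
  next
    case False
    then have "g y = y"
      using eq sr(4) by (simp add: fun_eq_iff)
    then show False using g[OF y] by blast
  qed
qed

text \<open>For fixed point free \<open>g\<close> this is a homotopy, on the sphere, from the identity to the
  constant \<open>- g 0\<close> that never vanishes; normalised it contracts the sphere.\<close>

definition disc_homotopy :: "((nat \<Rightarrow> real) \<Rightarrow> nat \<Rightarrow> real) \<Rightarrow> real \<times> (nat \<Rightarrow> real) \<Rightarrow> nat \<Rightarrow> real" where
  "disc_homotopy g z i = min 1 (2 - 2 * fst z) * snd z i
     - min 1 (2 * fst z) * g (\<lambda>k. min 1 (2 - 2 * fst z) * snd z k) i"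

lemma continuous_map_disc_homotopy:
  assumes g: "continuous_map (disc_topology n) (disc_topology n) g"
    and g_disc: "\<And>y. y \<in> disc n \<Longrightarrow> g y \<in> disc n \<and> g y \<noteq> y"
  shows "continuous_map (prod_topology (top_of_set {0..1}) (nsphere n))
    (subtopology (Euclidean_space (Suc n)) (- {\<lambda>i. 0})) (disc_homotopy g)"
proof -
  let ?P = "prod_topology (top_of_set {0..1::real}) (nsphere n)"
  define m where "m z k = min 1 (2 - 2 * fst z) * snd z k" for z :: "real \<times> (nat \<Rightarrow> real)" and k
  have h: "disc_homotopy g z i = min 1 (2 - 2 * fst z) * snd z i - min 1 (2 * fst z) * g (m z) i" for z i
    by (simp add: disc_homotopy_def m_def[abs_def])
  have cfst: "continuous_map ?P euclideanreal fst"
    by (intro continuous_map_into_fulltopology [OF continuous_map_fst])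
  have csnd: "continuous_map ?P euclideanreal (\<lambda>z. snd z k)" for k
    using continuous_map_compose[OF continuous_map_snd continuous_map_nsphere_projection]
    by (simp add: o_def)
  have m_disc: "m z \<in> disc n" if "z \<in> topspace ?P" for z
  proof -
    obtain t x where z: "z = (t, x)" by (cases z)
    have "0 \<le> min 1 (2 - 2 * t)" "min 1 (2 - 2 * t) \<le> (1::real)"
      and x: "(\<Sum>i\<le>n. x i ^ 2) = 1" "\<forall>i>n. x i = 0"
      using that by (auto simp: z topspace_nsphere_eq)
    then have "(\<Sum>i\<le>n. (min 1 (2 - 2 * t) * x i) ^ 2) \<le> 1"
      by (simp add: power_mult_distrib power_le_one flip: sum_distrib_left)
    then show ?thesis using x by (simp add: z m_def disc_def)
  qed
  have "continuous_map ?P (disc_topology n) m"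
    using m_disc
    by (auto simp: continuous_map_in_subtopology continuous_map_componentwise_UNIV m_def
        intro!: continuous_intros cfst csnd)
  then have cgm: "continuous_map ?P euclideanreal (\<lambda>z. g (m z) i)" for i
    using continuous_map_compose[OF _ continuous_map_compose[OF g continuous_map_powertop_subtopology_projection]]
    by (simp add: o_def)
  have "continuous_map ?P euclideanreal (\<lambda>z. disc_homotopy g z k)" for k
    unfolding h by (intro continuous_intros cfst csnd cgm)
  moreover have "(\<forall>i\<ge>Suc n. disc_homotopy g z i = 0) \<and> disc_homotopy g z \<noteq> (\<lambda>i. 0)"
    if z_top: "z \<in> topspace ?P" for z
  proof -
    obtain t x where z: "z = (t, x)" "0 \<le> t" "t \<le> 1" "x \<in> topspace (nsphere n)"
      using z_top by (cases z) auto
    have "\<forall>i\<ge>Suc n. disc_homotopy g z i = 0"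
      using z(4) g_disc[OF m_disc[OF z_top]]
      by (auto simp: h disc_def topspace_nsphere_eq z(1))
    moreover have "disc_homotopy g z \<noteq> (\<lambda>i. 0)"
      unfolding disc_homotopy_def z(1) fst_conv snd_conv
      using z(2,3) by (intro fixpoint_free_homotopy_nonzero[OF g_disc z(4)]) auto
    ultimately show ?thesis by simp
  qed
  ultimately show ?thesis
    unfolding Euclidean_space_def continuous_map_in_subtopology continuous_map_componentwise_UNIV
    by (fastforce simp flip: image_subset_iff_funcset)
qed

lemma disc_brouwer:
  assumes g: "continuous_map (disc_topology n) (disc_topology n) g"
  shows "\<exists>x\<in>disc n. g x = x"
proof (rule ccontr)
  assume "\<not> ?thesis"
  then have g_disc: "\<And>y. y \<in> disc n \<Longrightarrow> g y \<in> disc n \<and> g y \<noteq> y"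
    using g by (auto simp: continuous_map_def)
  let ?normalize = "\<lambda>x i. x i / sqrt (\<Sum>j\<le>n. x j ^ 2)"
  have "continuous_map (prod_topology (top_of_set {0..1}) (nsphere n)) (nsphere n)
      (?normalize \<circ> disc_homotopy g)"
    using continuous_map_compose continuous_map_normalize_nsphere
      continuous_map_disc_homotopy[OF g g_disc]
    by blast
  moreover have "(?normalize \<circ> disc_homotopy g) (0, x) = x" if "x \<in> topspace (nsphere n)" for x
    using that by (simp add: disc_homotopy_def topspace_nsphere_eq)
  moreover have "(?normalize \<circ> disc_homotopy g) (1, x) = ?normalize (\<lambda>i. - g (\<lambda>k. 0) i)" for x
    by (simp add: disc_homotopy_def)
  ultimately have "homotopic_with (\<lambda>x. True) (nsphere n) (nsphere n) id (\<lambda>x. ?normalize (\<lambda>i. - g (\<lambda>k. 0) i))"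
    by (subst homotopic_with) (auto intro!: exI[of _ "?normalize \<circ> disc_homotopy g"])
  then have "contractible_space (nsphere n)"
    unfolding contractible_space_def by blast
  then show False using non_contractible_space_nsphere by blast
qed

definition std_simplex :: "nat \<Rightarrow> (nat \<Rightarrow> real) set" where
  "std_simplex n = {x. (\<forall>i\<le>n. 0 \<le> x i) \<and> (\<Sum>i\<le>n. x i) = 1 \<and> (\<forall>i>n. x i = 0)}"

abbreviation simplex_topology :: "nat \<Rightarrow> (nat \<Rightarrow> real) topology" where
  "simplex_topology n \<equiv> subtopology (powertop_real UNIV) (std_simplex n)"

lemma simplex_subset_disc: "std_simplex n \<subseteq> disc n"
proof
  fix x assume x: "x \<in> std_simplex n"
  have "x i ^ 2 \<le> x i" if "i \<le> n" for i
  proof -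
    have "x i \<le> (\<Sum>j\<le>n. x j)"
      using x that by (intro member_le_sum) (auto simp: std_simplex_def)
    then show ?thesis
      using x that by (simp add: std_simplex_def power2_eq_square mult_le_cancel_right1 mult_left_le)
  qed
  then have "(\<Sum>i\<le>n. x i ^ 2) \<le> (\<Sum>i\<le>n. x i)"
    by (intro sum_mono) simp
  then show "x \<in> disc n"
    using x by (simp add: std_simplex_def disc_def)
qed

definition simplex_retraction :: "nat \<Rightarrow> (nat \<Rightarrow> real) \<Rightarrow> nat \<Rightarrow> real" where
  "simplex_retraction n x i =
     (let S = (\<Sum>j\<le>n. max (x j) 0)
      in if i \<le> n then (max (x i) 0 + max (1 - S) 0 / real (Suc n)) / max S 1 else 0)"

lemma simplex_retraction_in_simplex: "simplex_retraction n x \<in> std_simplex n"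
proof -
  let ?S = "\<Sum>j\<le>n. max (x j) 0"
  have "(\<Sum>i\<le>n. max (x i) 0 + max (1 - ?S) 0 / real (Suc n)) = ?S + max (1 - ?S) 0"
    by (simp add: sum.distrib)
  also have "\<dots> = max ?S 1" by linarith
  finally have "(\<Sum>i\<le>n. simplex_retraction n x i) = 1"
    by (simp add: simplex_retraction_def Let_def flip: sum_divide_distrib)
  then show ?thesis
    by (simp add: std_simplex_def simplex_retraction_def Let_def)
qed

lemma simplex_retraction_id:
  assumes "x \<in> std_simplex n"
  shows "simplex_retraction n x = x"
proof -
  have "(\<Sum>j\<le>n. max (x j) 0) = 1"
    using assms by (simp add: std_simplex_def max_absorb1)
  then show ?thesis
    using assms by (auto simp: std_simplex_def simplex_retraction_def fun_eq_iff max_absorb1)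
qed

lemma continuous_map_simplex_retraction:
  "continuous_map (subtopology (powertop_real UNIV) A) (simplex_topology n) (simplex_retraction n)"
proof -
  have "max (\<Sum>j\<le>n. max (x j) 0) 1 \<noteq> 0" for x :: "nat \<Rightarrow> real" by linarith
  then have "continuous_map (subtopology (powertop_real UNIV) A) euclideanreal (\<lambda>x. simplex_retraction n x i)" for i
    unfolding simplex_retraction_def Let_def by (cases "i \<le> n") (simp_all add: continuous_intros)
  then show ?thesis
    using simplex_retraction_in_simplex
    by (auto simp: continuous_map_in_subtopology continuous_map_componentwise_UNIV)
qed

lemma simplex_brouwer:
  assumes f: "continuous_map (simplex_topology n) (simplex_topology n) f"
  shows "\<exists>x\<in>std_simplex n. f x = x"
proof -
  have f_simplex: "f x \<in> std_simplex n" if "x \<in> std_simplex n" for x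
    using f that by (auto simp: continuous_map_def)
  have "continuous_map (disc_topology n) (simplex_topology n) (f \<circ> simplex_retraction n)"
    by (rule continuous_map_compose[OF continuous_map_simplex_retraction f])
  then have "continuous_map (disc_topology n) (disc_topology n) (f \<circ> simplex_retraction n)"
    using subsetD[OF simplex_subset_disc] f_simplex simplex_retraction_in_simplex
    by (auto simp: continuous_map_in_subtopology)
  then obtain x where "f (simplex_retraction n x) = x"
    using disc_brouwer by (metis comp_apply)
  moreover have "x \<in> std_simplex n"
    using calculation f_simplex simplex_retraction_in_simplex by metis
  ultimately show ?thesis
    using simplex_retraction_id by metis
qed

section \<open>Idempotent mixtures\<close>

definition self_convolution :: "'a set \<Rightarrow> ('a \<Rightarrow> 'a \<Rightarrow> 'a) \<Rightarrow> ('a \<Rightarrow> real) \<Rightarrow> 'a \<Rightarrow> real" where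
  "self_convolution J c y l = (\<Sum>(i, j)\<in>{(i, j) \<in> J \<times> J. c i j = l}. y i * y j)"

lemma sum_self_convolution:
  assumes "finite J" "\<forall>i\<in>J. \<forall>j\<in>J. c i j \<in> J"
  shows "(\<Sum>l\<in>J. v l * self_convolution J c y l) = (\<Sum>(i, j)\<in>J \<times> J. y i * y j * v (c i j))"
proof -
  let ?h = "\<lambda>(i, j). y i * y j * v (c i j)"
  have "(\<Sum>l\<in>J. v l * self_convolution J c y l)
      = (\<Sum>l\<in>J. \<Sum>z\<in>{z \<in> J \<times> J. (\<lambda>(i, j). c i j) z = l}. ?h z)"
    unfolding self_convolution_def sum_distrib_left
    by (intro sum.cong) (auto simp: mult.commute)
  also have "\<dots> = sum ?h (J \<times> J)"
    using assms by (intro sum.group) auto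
  finally show ?thesis .
qed

lemma self_convolution_fixed_point:
  assumes J: "finite J" "J \<noteq> {}" and c: "\<forall>i\<in>J. \<forall>j\<in>J. c i j \<in> J"
  shows "\<exists>y. distribution J y \<and> (\<forall>l\<in>J. self_convolution J c y l = y l)"
proof -
  obtain n where n: "card J = Suc n"
    using J by (metis card_gt_0_iff gr0_conv_Suc)
  then obtain h where h: "bij_betw h {..n} J"
    using J finite_same_card_bij[of "{..n}" J] by auto
  define g where "g = inv_into {..n} h"
  have g: "bij_betw g J {..n}"
    unfolding g_def by (rule bij_betw_inv_into[OF h])
  have hg: "h (g l) = l" if "l \<in> J" for l
    using bij_betw_inv_into_right[OF h that] by (simp add: g_def)
  have sum_J: "(\<Sum>l\<in>J. F (g l)) = (\<Sum>k\<le>n. F k)" for F :: "nat \<Rightarrow> real"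
    by (rule sum.reindex_bij_betw[OF g])
  define F where "F x k = (if k \<le> n then self_convolution J c (x \<circ> g) (h k) else 0)" for x k
  have F_simplex: "F x \<in> std_simplex n" if "x \<in> std_simplex n" for x
  proof -
    have "(\<Sum>k\<le>n. F x k) = (\<Sum>k\<le>n. self_convolution J c (x \<circ> g) (h k))"
      by (intro sum.cong) (auto simp: F_def)
    also have "\<dots> = (\<Sum>l\<in>J. self_convolution J c (x \<circ> g) l)"
      using sum_J[of "\<lambda>k. self_convolution J c (x \<circ> g) (h k)"] hg by simp
    also have "\<dots> = (\<Sum>l\<in>J. x (g l)) * (\<Sum>l\<in>J. x (g l))"
      using sum_self_convolution[OF J(1) c, of "\<lambda>_. 1"]
      by (simp add: sum_product sum.cartesian_product case_prod_unfold)
    also have "\<dots> = 1"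
      using that by (simp add: sum_J std_simplex_def)
    finally show ?thesis
      using that g by (auto simp: F_def std_simplex_def self_convolution_def bij_betw_def
          intro!: sum_nonneg mult_nonneg_nonneg)
  qed
  have "finite {(i, j) \<in> J \<times> J. c i j = l}" for l
    using J(1) by (auto intro: finite_subset[of _ "J \<times> J"])
  then have "continuous_map (simplex_topology n) euclideanreal (\<lambda>x. F x k)" for k
    unfolding F_def self_convolution_def
    by (cases "k \<le> n") (auto simp: case_prod_unfold intro!: continuous_intros)
  then have "continuous_map (simplex_topology n) (simplex_topology n) F"
    using F_simplex by (auto simp: continuous_map_in_subtopology continuous_map_componentwise_UNIV)
  then obtain x where x: "x \<in> std_simplex n" "F x = x"
    using simplex_brouwer by blast
  have "distribution J (x \<circ> g)"
    using x(1) g by (auto simp: distribution_def std_simplex_def sum_J bij_betw_def)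
  moreover have "self_convolution J c (x \<circ> g) l = (x \<circ> g) l" if "l \<in> J" for l
  proof -
    have "g l \<le> n" using that g by (auto simp: bij_betw_def)
    then show ?thesis
      using fun_cong[OF x(2), of "g l"] hg[OF that] by (simp add: F_def)
  qed
  ultimately show ?thesis by blast
qed

lemma meas_hatm_mixture_self_convolution:
  assumes J: "finite J" "distribution J a" and P: "\<forall>i\<in>J. P i \<in> PrT"
    and c: "\<forall>i\<in>J. \<forall>j\<in>J. c i j \<in> J" and a: "\<forall>l\<in>J. self_convolution J c a l = a l"
    and E: "\<forall>i\<in>J. \<forall>j\<in>J. meas (hatm (P i) (P j)) E = meas (P (c i j)) E"
  shows "meas (hatm (mixture J a P) (mixture J a P)) E = meas (mixture J a P) E"
proof -
  have "meas (hatm (mixture J a P) (mixture J a P)) E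
      = (\<Sum>(i, j)\<in>J \<times> J. a i * a j * meas (P (c i j)) E)"
    using E by (simp add: meas_hatm_mixture[OF J P] sum.cartesian_product)
  also have "\<dots> = (\<Sum>l\<in>J. meas (P l) E * self_convolution J c a l)"
    by (rule sum_self_convolution[OF J(1) c, symmetric])
  also have "\<dots> = meas (mixture J a P) E"
    using a by (simp add: meas_mixture mult.commute)
  finally show ?thesis .
qed

text \<open>Zero-one valued functionals are sorted by the sets of \<open>B\<close> they contain; on the resulting
  finite magma of types a probability vector equal to its convolution square is found.\<close>

lemma idempotent_mixture_on_finite_family:
  assumes B: "finite B" and Z: "Z \<noteq> {}" "Z \<subseteq> PrT" "\<forall>p\<in>Z. zero_one p"
    and Z_hatm: "\<forall>p\<in>Z. \<forall>q\<in>Z. hatm p q \<in> Z"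
  shows "\<exists>(J :: real set set set set) a R. finite J \<and> distribution J a \<and> (\<forall>S\<in>J. R S \<in> Z) \<and>
    (\<forall>E\<in>B. meas (hatm (mixture J a R) (mixture J a R)) E = meas (mixture J a R) E)"
proof -
  define type where "type p = {E\<in>B. meas p E = 1}" for p
  define J where "J = type ` Z"
  have Z_meas: "meas p E = meas q E" if "p \<in> Z" "q \<in> Z" "type p = type q" "E \<in> B" for p q E
  proof -
    have "meas p E \<in> {0, 1}" "meas q E \<in> {0, 1}"
      using that(1,2) Z(3) by (auto simp: zero_one_def)
    moreover have "meas p E = 1 \<longleftrightarrow> meas q E = 1"
      using that(3,4) unfolding type_def by blast
    ultimately show ?thesis by auto
  qed
  obtain R where R: "\<And>S. S \<in> J \<Longrightarrow> R S \<in> Z \<and> type (R S) = S"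
    unfolding J_def by (metis (no_types, lifting) f_inv_into_f inv_into_into)
  define c where "c S S' = type (hatm (R S) (R S'))" for S S'
  have c: "\<forall>S\<in>J. \<forall>S'\<in>J. c S S' \<in> J"
    using R Z_hatm by (auto simp: c_def J_def)
  have "J \<subseteq> Pow B"
    by (auto simp: J_def type_def)
  then have "finite J" "J \<noteq> {}"
    using B Z(1) finite_subset by (auto simp: J_def)
  then obtain a where a: "distribution J a" "\<forall>l\<in>J. self_convolution J c a l = a l"
    using self_convolution_fixed_point[OF _ _ c] by blast
  have "meas (hatm (mixture J a R) (mixture J a R)) E = meas (mixture J a R) E" if E: "E \<in> B" for E
  proof (rule meas_hatm_mixture_self_convolution[OF \<open>finite J\<close> a(1) _ c a(2)])
    show "\<forall>S\<in>J. R S \<in> PrT"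
      using R Z(2) by auto
    show "\<forall>S\<in>J. \<forall>S'\<in>J. meas (hatm (R S) (R S')) E = meas (R (c S S')) E"
    proof (intro ballI)
      fix S S' assume "S \<in> J" "S' \<in> J"
      then show "meas (hatm (R S) (R S')) E = meas (R (c S S')) E"
        using R Z_hatm c E by (intro Z_meas) (auto simp: c_def)
    qed
  qed
  moreover have "\<forall>S\<in>J. R S \<in> Z"
    using R by auto
  ultimately show ?thesis
    using \<open>finite J\<close> a(1) by (intro exI[of _ J] exI[of _ a] exI[of _ R]) auto
qed

theorem proposition3p2:
  fixes B :: "real set set set" and U :: "nat set set"
  assumes "finite B" and "\<forall>E\<in>B. E \<subseteq> TT"
    and "ultrafilter_N U" and "idempotent_N U"
  shows "\<exists>\<mu>\<in>AU U. \<forall>E\<in>B. meas (hatm \<mu> \<mu>) E = meas \<mu> E"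
proof -
  note U = assms(3) and I = assms(4)
  define Z where "Z = {p \<in> AU U. zero_one p}"
  have "comb_limit U \<in> Z"
    using comb_limit_AU[OF U] comb_limit_zero_one[OF U] by (simp add: Z_def)
  then have Z: "Z \<noteq> {}" "Z \<subseteq> PrT" "\<forall>p\<in>Z. zero_one p"
    by (auto simp: Z_def dest: AU_PrT)
  have Z_hatm: "\<forall>p\<in>Z. \<forall>q\<in>Z. hatm p q \<in> Z"
    using hatm_AU[OF U I] hatm_zero_one by (simp add: Z_def)
  from idempotent_mixture_on_finite_family[OF assms(1) Z Z_hatm]
  obtain J :: "real set set set set" and a R where "finite J" "distribution J a" "\<forall>S\<in>J. R S \<in> Z"
    and idem: "\<forall>E\<in>B. meas (hatm (mixture J a R) (mixture J a R)) E = meas (mixture J a R) E"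
    by (elim exE conjE)
  then have "mixture J a R \<in> AU U"
    by (intro mixture_AU[OF U]) (auto simp: Z_def)
  with idem show ?thesis by blast
qed

end
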